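(* Let $n\ge 2$ and $d\ge 2$. For every biseparable state $\rho$ on $(\mathbb{C}^d)^{\otimes n}$, $$\mathcal{C}_{\frac{n}{2}+1}(\rho)=\sum_{\alpha\neq\emptyset,\ |\alpha|\ge \frac n2+1}\|\tau_\alpha(\rho)\|^2\le d^n-d.$$
   Context: Consider $n$ qudits with Hilbert space $(\mathbb{C}^d)^{\otimes n}$. Let $\lambda_0=\mathbb{1}_d$ and let $\lambda_1,\dots,\lambda_{d^2-1}$ be Hermitian traceless $d\times d$ matrices normalized so that $\mathrm{Tr}[\lambda_i\lambda_j]=d\,\delta_{ij}$. For a nonempty subset $\alpha\subseteq\{1,\dots,n\}$ and a state $\rho$ with reduced state $\rho_\alpha$, define $\|\tau_\alpha(\rho)\|^2=\sum_{(i_k)_{k\in\alpha}\in\{1,\dots,d^2-1\}^{\alpha}}\big(\mathrm{Tr}[\rho_\alpha\bigotimes_{k\in\alpha}\lambda_{i_k}]\big)^2$. For real $x$, $\mathcal{C}_x(\rho)=\sum_{\alpha\neq\emptyset,\ |\alpha|\ge x}\|\tau_\alpha(\rho)\|^2$. A state is biseparable if it is a convex combination of pure states each of which is a product $|\phi\rangle_\beta\otimes|\chi\rangle_{\overline{\beta}}$ for some bipartition $\{1,\dots,n\}=\beta\,\dot\cup\,\overline\beta$ into nonempty sets (the bipartition may differ between terms). *)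

theory Defs
  imports Complex_Main "HOL-Library.FuncSet"
begin

text \<open>Computational basis of (C^d)^{tensor S} for a set S of qudit sites:
  extensional functions S -> {0..d-1}.  Sites of the n-qudit system are {..<n}.\<close>
type_synonym cfg = "nat \<Rightarrow> nat"

definition configs :: "nat \<Rightarrow> nat set \<Rightarrow> cfg set" where
  "configs d S = PiE S (\<lambda>_. {..<d})"

text \<open>Operators on (C^d)^{tensor S} are matrices indexed by configurations;
  a d x d matrix is a function nat => nat => complex read on {..<d}.\<close>
type_synonym op = "cfg \<Rightarrow> cfg \<Rightarrow> complex"
type_synonym lmat = "nat \<Rightarrow> nat \<Rightarrow> complex"

definition local_basis :: "nat \<Rightarrow> (nat \<Rightarrow> lmat) \<Rightarrow> bool" where
  "local_basis d lam \<longleftrightarrow>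
     (\<forall>i\<in>{1..<d^2}. \<forall>a<d. \<forall>b<d. lam i a b = cnj (lam i b a)) \<and>
     (\<forall>i\<in>{1..<d^2}. (\<Sum>a<d. lam i a a) = 0) \<and>
     (\<forall>i\<in>{1..<d^2}. \<forall>j\<in>{1..<d^2}.
        (\<Sum>a<d. \<Sum>b<d. lam i a b * lam j b a) = (if i = j then of_nat d else 0))"

definition glue :: "nat set \<Rightarrow> cfg \<Rightarrow> cfg \<Rightarrow> cfg" where
  "glue \<alpha> x z = (\<lambda>k. if k \<in> \<alpha> then x k else z k)"

definition reduced :: "nat \<Rightarrow> nat \<Rightarrow> op \<Rightarrow> nat set \<Rightarrow> op" where
  "reduced d n \<rho> \<alpha> = (\<lambda>x y. \<Sum>z\<in>configs d ({..<n} - \<alpha>). \<rho> (glue \<alpha> x z) (glue \<alpha> y z))"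

definition tensor_op :: "(nat \<Rightarrow> lmat) \<Rightarrow> nat set \<Rightarrow> (nat \<Rightarrow> nat) \<Rightarrow> op" where
  "tensor_op lam \<alpha> i = (\<lambda>x y. \<Prod>k\<in>\<alpha>. lam (i k) (x k) (y k))"

definition trace_prod :: "nat \<Rightarrow> nat set \<Rightarrow> op \<Rightarrow> op \<Rightarrow> complex" where
  "trace_prod d S A B = (\<Sum>x\<in>configs d S. \<Sum>y\<in>configs d S. A x y * B y x)"

text \<open>||tau_alpha(rho)||^2.  The traces are real (Hermitian operators); we square
  their real part.\<close>
definition tau_sq :: "nat \<Rightarrow> nat \<Rightarrow> (nat \<Rightarrow> lmat) \<Rightarrow> op \<Rightarrow> nat set \<Rightarrow> real" where
  "tau_sq d n lam \<rho> \<alpha> =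
     (\<Sum>i\<in>PiE \<alpha> (\<lambda>_. {1..<d^2}).
        (Re (trace_prod d \<alpha> (reduced d n \<rho> \<alpha>) (tensor_op lam \<alpha> i)))^2)"

definition corr_C :: "nat \<Rightarrow> nat \<Rightarrow> (nat \<Rightarrow> lmat) \<Rightarrow> real \<Rightarrow> op \<Rightarrow> real" where
  "corr_C d n lam t \<rho> =
     (\<Sum>\<alpha>\<in>{\<alpha>. \<alpha> \<subseteq> {..<n} \<and> \<alpha> \<noteq> {} \<and> real (card \<alpha>) \<ge> t}. tau_sq d n lam \<rho> \<alpha>)"

definition biseparable :: "nat \<Rightarrow> nat \<Rightarrow> op \<Rightarrow> bool" where
  "biseparable d n \<rho> \<longleftrightarrow>
     (\<exists>(m::nat) (p::nat \<Rightarrow> real) (\<psi>::nat \<Rightarrow> cfg \<Rightarrow> complex) (\<beta>::nat \<Rightarrow> nat set)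
        (\<phi>::nat \<Rightarrow> cfg \<Rightarrow> complex) (\<chi>::nat \<Rightarrow> cfg \<Rightarrow> complex).
        (\<forall>j<m. p j \<ge> 0) \<and> (\<Sum>j<m. p j) = 1 \<and>
        (\<forall>j<m. (\<Sum>x\<in>configs d {..<n}. (cmod (\<psi> j x))^2) = 1) \<and>
        (\<forall>j<m. \<beta> j \<subseteq> {..<n} \<and> \<beta> j \<noteq> {} \<and> \<beta> j \<noteq> {..<n} \<and>
           (\<forall>x\<in>configs d {..<n}.
              \<psi> j x = \<phi> j (restrict x (\<beta> j)) * \<chi> j (restrict x ({..<n} - \<beta> j)))) \<and>
        (\<forall>x\<in>configs d {..<n}. \<forall>y\<in>configs d {..<n}.
           \<rho> x y = (\<Sum>j<m. complex_of_real (p j) * \<psi> j x * cnj (\<psi> j y))))"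

end

(*
  Tr[rho_alpha (x)_{k in alpha} lambda_(i_k)] is the Hilbert-Schmidt product of rho with the
  n-site string operator E carrying lambda_(i_k) on alpha and the identity elsewhere; distinct
  strings are orthogonal, each of squared norm d^n. Let psi = phi (x) chi be a unit product vector
  across gamma | complement with 2 |gamma| <= n. No alpha with |alpha| >= n/2 + 1 fits into gamma,
  so every such E is traceless at some site outside gamma and hence orthogonal to
  |phi><phi| (x) 1, whose squared norm is d^(n - |gamma|). Bessel's inequality for |psi><psi|
  against this orthogonal family gives d^-(n - |gamma|) + d^-n C(psi) <= 1, that is
  C(psi) <= d^n - d^|gamma| <= d^n - d. Mixtures follow because the square of a convex
  combination is at most the convex combination of the squares.
*)
theory Submission
  imports Defs
begin

lemma finite_configs [simp]: "finite S \<Longrightarrow> finite (configs d S)"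
  unfolding configs_def by (simp add: finite_PiE)

lemma card_configs: "finite S \<Longrightarrow> card (configs d S) = d ^ card S"
  unfolding configs_def by (simp add: card_PiE)

lemma glue_in_configs:
  "a \<in> configs d G \<Longrightarrow> b \<in> configs d (S - G) \<Longrightarrow> G \<subseteq> S \<Longrightarrow> glue G a b \<in> configs d S"
  unfolding configs_def glue_def PiE_def Pi_def extensional_def by auto

lemma restrict_glue_left: "a \<in> configs d G \<Longrightarrow> restrict (glue G a b) G = a"
  unfolding configs_def glue_def PiE_def extensional_def by auto

lemma restrict_glue_right: "b \<in> configs d (S - G) \<Longrightarrow> restrict (glue G a b) (S - G) = b"
  unfolding configs_def glue_def PiE_def extensional_def by auto

lemma glue_restrict:
  "G \<subseteq> S \<Longrightarrow> x \<in> configs d S \<Longrightarrow> glue G (restrict x G) (restrict x (S - G)) = x"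
  unfolding configs_def glue_def PiE_def extensional_def by auto

lemma bij_betw_glue:
  assumes "G \<subseteq> S"
  shows "bij_betw (\<lambda>(a, b). glue G a b) (configs d G \<times> configs d (S - G)) (configs d S)"
proof (rule bij_betwI[where g = "\<lambda>x. (restrict x G, restrict x (S - G))"])
  show "(\<lambda>x. (restrict x G, restrict x (S - G))) \<in> configs d S \<rightarrow> configs d G \<times> configs d (S - G)"
    using assms unfolding configs_def by auto
qed (use assms glue_in_configs restrict_glue_left restrict_glue_right glue_restrict in auto)

lemma sum_configs_glue:
  assumes "G \<subseteq> S"
  shows "(\<Sum>x\<in>configs d S. f x) = (\<Sum>a\<in>configs d G. \<Sum>b\<in>configs d (S - G). f (glue G a b))"
  by (simp add: sum.reindex_bij_betw[OF bij_betw_glue[OF assms], symmetric] sum.cartesian_product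
      split_def)

lemma sum_configs_restrict_mult:
  assumes "G \<subseteq> S"
  shows "(\<Sum>x\<in>configs d S. g (restrict x G) * h (restrict x (S - G)))
       = (\<Sum>a\<in>configs d G. g a) * (\<Sum>b\<in>configs d (S - G). (h b :: 'a :: comm_semiring_0))"
  by (simp add: sum_configs_glue[OF assms] restrict_glue_left restrict_glue_right sum_product
      cong: sum.cong)

lemma sum2_configs_restrict_mult:
  assumes "G \<subseteq> S"
  shows "(\<Sum>x\<in>configs d S. \<Sum>y\<in>configs d S.
            g (restrict x G) (restrict y G) * h (restrict x (S - G)) (restrict y (S - G)))
       = (\<Sum>a\<in>configs d G. \<Sum>a'\<in>configs d G. g a a')
         * (\<Sum>b\<in>configs d (S - G). \<Sum>b'\<in>configs d (S - G). (h b b' :: 'a :: comm_semiring_0))"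
proof -
  have "(\<Sum>y\<in>configs d S. g (restrict x G) (restrict y G) * h (restrict x (S - G)) (restrict y (S - G)))
      = (\<Sum>a'\<in>configs d G. g (restrict x G) a') * (\<Sum>b'\<in>configs d (S - G). h (restrict x (S - G)) b')"
    for x by (rule sum_configs_restrict_mult[OF assms])
  then show ?thesis
    by (simp add: sum_configs_restrict_mult[OF assms, where g = "\<lambda>a. \<Sum>a'\<in>configs d G. g a a'"
          and h = "\<lambda>b. \<Sum>b'\<in>configs d (S - G). h b b'"])
qed

lemma sum_configs_prod:
  "finite S \<Longrightarrow> (\<Sum>x\<in>configs d S. \<Prod>k\<in>S. f k (x k)) = (\<Prod>k\<in>S. \<Sum>c<d. (f k c :: 'a :: comm_semiring_1))"
  unfolding configs_def by (simp add: prod_sum_PiE)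

definition local_op :: "(nat \<Rightarrow> lmat) \<Rightarrow> nat \<Rightarrow> lmat" where
  "local_op lam j = (if j = 0 then (\<lambda>a b. if a = b then 1 else 0) else lam j)"

lemma local_op_trace:
  assumes "local_basis d lam" "j < d^2" "j \<noteq> 0"
  shows "(\<Sum>c<d. local_op lam j c c) = 0"
proof -
  have "j \<in> {1..<d^2}" using assms by auto
  then have "(\<Sum>c<d. lam j c c) = 0" using assms(1) unfolding local_basis_def by blast
  then show ?thesis using assms(3) by (simp add: local_op_def)
qed

lemma local_op_adjoint:
  assumes "local_basis d lam" "j < d^2" "a < d" "b < d"
  shows "cnj (local_op lam j b a) = local_op lam j a b"
proof (cases "j = 0")
  case False
  then have "j \<in> {1..<d^2}" using assms by auto
  then have "lam j a b = cnj (lam j b a)" using assms unfolding local_basis_def by blast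
  then show ?thesis using False by (simp add: local_op_def)
qed (simp add: local_op_def)

lemma sum_identity_mult:
  fixes d :: nat and M :: lmat
  shows "(\<Sum>a<d. \<Sum>b<d. (if a = b then 1 else 0) * M b a) = (\<Sum>a<d. M a a)"
    and "(\<Sum>a<d. \<Sum>b<d. M a b * (if b = a then 1 else 0)) = (\<Sum>a<d. M a a)"
  by (auto intro!: sum.cong simp: if_distrib[of "\<lambda>z. z * _"] if_distrib[of "\<lambda>z. _ * z"]
      cong: if_cong)

lemma local_op_hs_orthogonal:
  assumes lb: "local_basis d lam" and j: "j < d^2" and j': "j' < d^2"
  shows "(\<Sum>a<d. \<Sum>b<d. cnj (local_op lam j b a) * local_op lam j' b a)
       = (if j = j' then of_nat d else 0)"
proof -
  have "(\<Sum>a<d. \<Sum>b<d. cnj (local_op lam j b a) * local_op lam j' b a)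
      = (\<Sum>a<d. \<Sum>b<d. local_op lam j a b * local_op lam j' b a)"
    by (simp add: local_op_adjoint[OF lb j])
  also have "\<dots> = (if j = j' then of_nat d else 0)"
  proof (cases "j = 0 \<or> j' = 0")
    case True
    then consider "j = 0" | "j' = 0" "j \<noteq> 0" by blast
    then show ?thesis
    proof cases
      case 1
      then show ?thesis
        using local_op_trace[OF lb j'] by (simp add: local_op_def sum_identity_mult)
    next
      case 2
      then show ?thesis
        using local_op_trace[OF lb j] by (simp add: local_op_def sum_identity_mult)
    qed
  next
    case False
    then have "j \<in> {1..<d^2}" "j' \<in> {1..<d^2}" using j j' by auto
    then have "(\<Sum>a<d. \<Sum>b<d. lam j a b * lam j' b a) = (if j = j' then of_nat d else 0)"
      using lb unfolding local_basis_def by blast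
    then show ?thesis using False by (simp add: local_op_def)
  qed
  finally show ?thesis .
qed

definition hs_inner :: "nat \<Rightarrow> nat set \<Rightarrow> op \<Rightarrow> op \<Rightarrow> complex" where
  "hs_inner d S A B = (\<Sum>x\<in>configs d S. \<Sum>y\<in>configs d S. A x y * cnj (B x y))"

definition adjoint :: "op \<Rightarrow> op" where
  "adjoint A x y = cnj (A y x)"

lemma hs_inner_pairs:
  "hs_inner d S A B = (\<Sum>p\<in>configs d S \<times> configs d S. case_prod A p * cnj (case_prod B p))"
  unfolding hs_inner_def by (simp add: sum.cartesian_product')

definition string_op :: "(nat \<Rightarrow> lmat) \<Rightarrow> nat set \<Rightarrow> (nat \<Rightarrow> nat) \<Rightarrow> op" where
  "string_op lam S j x y = (\<Prod>k\<in>S. local_op lam (j k) (x k) (y k))"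

lemma string_op_split:
  assumes "G \<subseteq> S" "finite S"
  shows "string_op lam S j x y = string_op lam G j (restrict x G) (restrict y G)
           * string_op lam (S - G) j (restrict x (S - G)) (restrict y (S - G))"
  unfolding string_op_def using prod.subset_diff[OF assms] by (simp add: mult.commute)

lemma trace_string_op_eq_0:
  assumes lb: "local_basis d lam" and "finite S" "k \<in> S" "j k \<noteq> 0" "j k < d^2"
  shows "(\<Sum>x\<in>configs d S. string_op lam S j x x) = 0"
proof -
  have "(\<Sum>x\<in>configs d S. string_op lam S j x x) = (\<Prod>k\<in>S. \<Sum>c<d. local_op lam (j k) c c)"
    unfolding string_op_def using assms(2) by (rule sum_configs_prod)
  also have "\<dots> = 0"
    using assms local_op_trace[OF lb] by (auto simp: prod_zero_iff)
  finally show ?thesis .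
qed

lemma string_op_hs_orthogonal:
  assumes lb: "local_basis d lam" and S: "finite S"
    and j: "\<And>k. k \<in> S \<Longrightarrow> j k < d^2" and j': "\<And>k. k \<in> S \<Longrightarrow> j' k < d^2"
  shows "hs_inner d S (adjoint (string_op lam S j)) (adjoint (string_op lam S j'))
       = (if \<forall>k\<in>S. j k = j' k then of_nat d ^ card S else 0)"
proof -
  define g where "g k a b = cnj (local_op lam (j k) b a) * local_op lam (j' k) b a" for k a b
  have "hs_inner d S (adjoint (string_op lam S j)) (adjoint (string_op lam S j'))
      = (\<Sum>x\<in>configs d S. \<Sum>y\<in>configs d S. \<Prod>k\<in>S. g k (x k) (y k))"
    unfolding hs_inner_def adjoint_def string_op_def g_def by (simp add: prod.distrib)
  also have "\<dots> = (\<Sum>x\<in>configs d S. \<Prod>k\<in>S. \<Sum>b<d. g k (x k) b)"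
    by (simp add: sum_configs_prod[OF S, where f = "\<lambda>k. g k (_ k)"])
  also have "\<dots> = (\<Prod>k\<in>S. \<Sum>a<d. \<Sum>b<d. g k a b)"
    by (rule sum_configs_prod[OF S])
  also have "\<dots> = (\<Prod>k\<in>S. if j k = j' k then of_nat d else 0)"
    unfolding g_def using local_op_hs_orthogonal[OF lb j j'] by simp
  also have "\<dots> = (if \<forall>k\<in>S. j k = j' k then of_nat d ^ card S else 0)"
    using S by auto
  finally show ?thesis .
qed

definition pad_index :: "nat set \<Rightarrow> (nat \<Rightarrow> nat) \<Rightarrow> nat \<Rightarrow> nat" where
  "pad_index \<alpha> i k = (if k \<in> \<alpha> then i k else 0)"

lemma pad_index_less:
  "i \<in> PiE \<alpha> (\<lambda>_. {1..<d^2}) \<Longrightarrow> d > 0 \<Longrightarrow> pad_index \<alpha> i k < d^2"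
  unfolding pad_index_def by auto

lemma pad_index_eq_iff:
  assumes "\<alpha> \<subseteq> S" "\<alpha>' \<subseteq> S"
    and i: "i \<in> PiE \<alpha> (\<lambda>_. {1..<d^2})" and i': "i' \<in> PiE \<alpha>' (\<lambda>_. {1..<d^2})"
  shows "(\<forall>k\<in>S. pad_index \<alpha> i k = pad_index \<alpha>' i' k) \<longleftrightarrow> \<alpha> = \<alpha>' \<and> i = i'"
proof
  assume eq: "\<forall>k\<in>S. pad_index \<alpha> i k = pad_index \<alpha>' i' k"
  have nonzero: "k \<in> \<alpha> \<Longrightarrow> i k \<noteq> 0" "k \<in> \<alpha>' \<Longrightarrow> i' k \<noteq> 0" for k
    using PiE_mem[OF i] PiE_mem[OF i'] by fastforce+
  have "k \<in> \<alpha> \<longleftrightarrow> k \<in> \<alpha>'" for k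
    using bspec[OF eq, of k] assms(1,2) nonzero unfolding pad_index_def
    by (cases "k \<in> S") (fastforce split: if_splits)+
  then have "\<alpha> = \<alpha>'" by blast
  moreover have "i = i'"
  proof (rule extensionalityI[of i \<alpha>])
    show "i \<in> extensional \<alpha>" "i' \<in> extensional \<alpha>"
      using i i' \<open>\<alpha> = \<alpha>'\<close> by (simp_all add: PiE_def)
    show "i k = i' k" if "k \<in> \<alpha>" for k
      using bspec[OF eq, of k] that assms(1) \<open>\<alpha> = \<alpha>'\<close> unfolding pad_index_def by auto
  qed
  ultimately show "\<alpha> = \<alpha>' \<and> i = i'" ..
qed simp

lemma string_op_pad_index:
  assumes "\<alpha> \<subseteq> S" "finite S" and i: "i \<in> PiE \<alpha> (\<lambda>_. {1..<d^2})"
  shows "string_op lam S (pad_index \<alpha> i) y x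
       = tensor_op lam \<alpha> i (restrict y \<alpha>) (restrict x \<alpha>)
         * (if restrict y (S - \<alpha>) = restrict x (S - \<alpha>) then 1 else 0)"
proof -
  have nonzero: "i k \<noteq> 0" if "k \<in> \<alpha>" for k
    using PiE_mem[OF i that] by auto
  have on_\<alpha>: "string_op lam \<alpha> (pad_index \<alpha> i) (restrict y \<alpha>) (restrict x \<alpha>)
      = tensor_op lam \<alpha> i (restrict y \<alpha>) (restrict x \<alpha>)"
    unfolding string_op_def tensor_op_def local_op_def pad_index_def
    by (intro prod.cong refl) (simp add: nonzero)
  have restrict_eq: "restrict y (S - \<alpha>) = restrict x (S - \<alpha>) \<longleftrightarrow> (\<forall>k\<in>S - \<alpha>. y k = x k)"
    by (metis restrict_apply' restrict_ext)
  have "string_op lam (S - \<alpha>) (pad_index \<alpha> i) (restrict y (S - \<alpha>)) (restrict x (S - \<alpha>))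
      = (\<Prod>k\<in>S - \<alpha>. if y k = x k then 1 else 0)"
    unfolding string_op_def local_op_def pad_index_def by (intro prod.cong refl) simp
  also have "\<dots> = (if restrict y (S - \<alpha>) = restrict x (S - \<alpha>) then 1 else 0)"
    using assms(2) unfolding restrict_eq by (simp add: prod_zero_iff)
  finally show ?thesis using string_op_split[OF assms(1,2)] on_\<alpha> by simp
qed

lemma pad_string_op_hs_orthogonal:
  assumes lb: "local_basis d lam" and "d > 0" "finite S" "\<alpha> \<subseteq> S" "\<alpha>' \<subseteq> S"
    and i: "i \<in> PiE \<alpha> (\<lambda>_. {1..<d^2})" and i': "i' \<in> PiE \<alpha>' (\<lambda>_. {1..<d^2})"
  shows "hs_inner d S (adjoint (string_op lam S (pad_index \<alpha> i)))
           (adjoint (string_op lam S (pad_index \<alpha>' i')))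
       = (if \<alpha> = \<alpha>' \<and> i = i' then of_nat d ^ card S else 0)"
  using string_op_hs_orthogonal[OF lb \<open>finite S\<close>] pad_index_less[OF i] pad_index_less[OF i']
    pad_index_eq_iff[OF assms(4,5) i i'] \<open>d > 0\<close>
  by simp

(* Tr[rho E] for the string E with lambda_(i_k) on alpha and the identity elsewhere. *)
definition corr_coeff ::
    "nat \<Rightarrow> nat \<Rightarrow> (nat \<Rightarrow> lmat) \<Rightarrow> op \<Rightarrow> nat set \<Rightarrow> (nat \<Rightarrow> nat) \<Rightarrow> complex" where
  "corr_coeff d n lam \<rho> \<alpha> i = hs_inner d {..<n} \<rho> (adjoint (string_op lam {..<n} (pad_index \<alpha> i)))"

lemma trace_reduced_tensor_op:
  assumes \<alpha>: "\<alpha> \<subseteq> {..<n}" and i: "i \<in> PiE \<alpha> (\<lambda>_. {1..<d^2})"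
  shows "trace_prod d \<alpha> (reduced d n \<rho> \<alpha>) (tensor_op lam \<alpha> i) = corr_coeff d n lam \<rho> \<alpha> i"
proof -
  let ?A = "configs d \<alpha>" and ?B = "configs d ({..<n} - \<alpha>)" and ?T = "tensor_op lam \<alpha> i"
  have "corr_coeff d n lam \<rho> \<alpha> i = (\<Sum>a\<in>?A. \<Sum>b\<in>?B. \<Sum>a'\<in>?A. \<Sum>b'\<in>?B.
      \<rho> (glue \<alpha> a b) (glue \<alpha> a' b') * (?T a' a * (if b' = b then 1 else 0)))"
    unfolding corr_coeff_def hs_inner_def adjoint_def sum_configs_glue[OF \<alpha>]
    by (intro sum.cong refl)
      (simp add: string_op_pad_index[OF \<alpha> _ i] restrict_glue_left restrict_glue_right)
  also have "\<dots> = (\<Sum>a\<in>?A. \<Sum>b\<in>?B. \<Sum>a'\<in>?A. \<rho> (glue \<alpha> a b) (glue \<alpha> a' b) * ?T a' a)"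
    by (intro sum.cong refl) (simp add: if_distrib[of "\<lambda>z. _ * (_ * z)"] cong: if_cong)
  also have "\<dots> = (\<Sum>a\<in>?A. \<Sum>a'\<in>?A. (\<Sum>b\<in>?B. \<rho> (glue \<alpha> a b) (glue \<alpha> a' b)) * ?T a' a)"
    by (simp add: sum.swap[of _ ?B] sum_distrib_right)
  also have "\<dots> = trace_prod d \<alpha> (reduced d n \<rho> \<alpha>) ?T"
    unfolding trace_prod_def reduced_def ..
  finally show ?thesis ..
qed

lemma corr_coeff_sum:
  assumes "\<And>x y. x \<in> configs d {..<n} \<Longrightarrow> y \<in> configs d {..<n} \<Longrightarrow> \<rho> x y = (\<Sum>j\<in>J. c j * \<sigma> j x y)"
  shows "corr_coeff d n lam \<rho> \<alpha> i = (\<Sum>j\<in>J. c j * corr_coeff d n lam (\<sigma> j) \<alpha> i)"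
  unfolding corr_coeff_def hs_inner_def using assms
  by (simp add: sum_distrib_left sum_distrib_right sum.swap[of _ J] mult.assoc cong: sum.cong)

lemma sum_mult_cnj:
  "(\<Sum>a\<in>A. f a * cnj (f a)) = of_real (\<Sum>a\<in>A. (cmod (f a))^2)"
  by (simp only: of_real_sum complex_norm_square)

lemma bessel_inequality:
  fixes e :: "'i \<Rightarrow> 'x \<Rightarrow> complex" and v :: "'x \<Rightarrow> complex" and c :: "'i \<Rightarrow> real"
  assumes "finite I"
    and orth: "\<And>a b. a \<in> I \<Longrightarrow> b \<in> I \<Longrightarrow> a \<noteq> b \<Longrightarrow> (\<Sum>x\<in>X. e a x * cnj (e b x)) = 0"
    and nrm: "\<And>a. a \<in> I \<Longrightarrow> (\<Sum>x\<in>X. e a x * cnj (e a x)) = of_real (c a)"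
    and pos: "\<And>a. a \<in> I \<Longrightarrow> c a > 0"
  shows "(\<Sum>a\<in>I. (cmod (\<Sum>x\<in>X. v x * cnj (e a x)))^2 / c a) \<le> (\<Sum>x\<in>X. (cmod (v x))^2)"
proof -
  define ip where "ip u w = (\<Sum>x\<in>X. u x * cnj (w x))" for u w :: "'x \<Rightarrow> complex"
  define co where "co a = ip v (e a) / of_real (c a)" for a
  (* s is the orthogonal projection of v onto the span of the e a; use 0 \<le> |v - s|^2. *)
  define s where "s x = (\<Sum>a\<in>I. co a * e a x)" for x
  define K where "K = (\<Sum>a\<in>I. (cmod (ip v (e a)))^2 / c a)"
  have ip_s_left: "ip s w = (\<Sum>a\<in>I. co a * ip (e a) w)" for w
    unfolding ip_def s_def by (simp add: sum_distrib_left sum_distrib_right sum.swap[of _ X] mult_ac)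
  have ip_s_right: "ip w s = (\<Sum>a\<in>I. cnj (co a) * ip w (e a))" for w
    unfolding ip_def s_def by (simp add: sum_distrib_left sum_distrib_right sum.swap[of _ X] mult_ac)
  have "ip s (e b) = ip v (e b)" if "b \<in> I" for b
  proof -
    have "ip s (e b) = (\<Sum>a\<in>I. if a = b then co b * of_real (c b) else 0)"
      unfolding ip_s_left using orth[OF _ that] nrm[OF that] by (intro sum.cong) (auto simp: ip_def)
    also have "\<dots> = ip v (e b)"
      using \<open>finite I\<close> that pos[OF that] by (simp add: co_def)
    finally show ?thesis .
  qed
  then have ip_s_s: "ip s s = ip v s"
    unfolding ip_s_right by (intro sum.cong) simp_all
  have ip_v_s: "ip v s = of_real K"
    unfolding ip_s_right K_def co_def of_real_sum of_real_divide complex_norm_square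
    by (simp add: mult.commute)
  have "of_real (\<Sum>x\<in>X. (cmod (v x - s x))^2) = ip v v - ip v s - cnj (ip v s) + ip s s"
    unfolding ip_def of_real_sum complex_norm_square
    by (simp add: algebra_simps sum_subtractf sum.distrib)
  also have "\<dots> = of_real ((\<Sum>x\<in>X. (cmod (v x))^2) - K)"
    unfolding ip_s_s ip_v_s by (simp add: ip_def sum_mult_cnj)
  finally have "(\<Sum>x\<in>X. (cmod (v x - s x))^2) = (\<Sum>x\<in>X. (cmod (v x))^2) - K"
    using of_real_eq_iff by blast
  moreover have "0 \<le> (\<Sum>x\<in>X. (cmod (v x - s x))^2)" by (simp add: sum_nonneg)
  ultimately show ?thesis unfolding K_def ip_def by simp
qed

lemma bessel_inequality_insert:
  fixes e :: "'i \<Rightarrow> 'x \<Rightarrow> complex" and f v :: "'x \<Rightarrow> complex" and c :: "'i \<Rightarrow> real"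
  assumes "finite I"
    and orth: "\<And>a b. a \<in> I \<Longrightarrow> b \<in> I \<Longrightarrow> a \<noteq> b \<Longrightarrow> (\<Sum>x\<in>X. e a x * cnj (e b x)) = 0"
    and nrm: "\<And>a. a \<in> I \<Longrightarrow> (\<Sum>x\<in>X. e a x * cnj (e a x)) = of_real (c a)"
    and pos: "\<And>a. a \<in> I \<Longrightarrow> c a > 0"
    and orth_f: "\<And>a. a \<in> I \<Longrightarrow> (\<Sum>x\<in>X. f x * cnj (e a x)) = 0"
    and nrm_f: "(\<Sum>x\<in>X. f x * cnj (f x)) = of_real cf" and pos_f: "cf > 0"
  shows "(cmod (\<Sum>x\<in>X. v x * cnj (f x)))^2 / cf + (\<Sum>a\<in>I. (cmod (\<Sum>x\<in>X. v x * cnj (e a x)))^2 / c a)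
       \<le> (\<Sum>x\<in>X. (cmod (v x))^2)"
proof -
  define e' where "e' q = (case q of None \<Rightarrow> f | Some a \<Rightarrow> e a)" for q
  define c' where "c' q = (case q of None \<Rightarrow> cf | Some a \<Rightarrow> c a)" for q
  have orth_f': "(\<Sum>x\<in>X. e a x * cnj (f x)) = 0" if "a \<in> I" for a
    using arg_cong[OF orth_f[OF that], of cnj] by (simp add: mult.commute)
  have "(\<Sum>q\<in>insert None (Some ` I). (cmod (\<Sum>x\<in>X. v x * cnj (e' q x)))^2 / c' q)
      \<le> (\<Sum>x\<in>X. (cmod (v x))^2)"
    by (rule bessel_inequality)
      (use assms orth_f' in \<open>auto simp: e'_def c'_def split: option.splits\<close>)
  then show ?thesis
    using \<open>finite I\<close> by (simp add: sum.reindex e'_def c'_def)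
qed

definition rank_one :: "(cfg \<Rightarrow> complex) \<Rightarrow> op" where
  "rank_one \<psi> x y = \<psi> x * cnj (\<psi> y)"

definition rank_one_tensor_id :: "nat set \<Rightarrow> nat set \<Rightarrow> (cfg \<Rightarrow> complex) \<Rightarrow> op" where
  "rank_one_tensor_id S \<gamma> \<phi> x y = rank_one \<phi> (restrict x \<gamma>) (restrict y \<gamma>)
     * (if restrict x (S - \<gamma>) = restrict y (S - \<gamma>) then 1 else 0)"

lemma sum2_configs_diagonal:
  "finite T \<Longrightarrow> (\<Sum>b\<in>configs d T. \<Sum>b'\<in>configs d T. (if b = b' then 1 else 0) * f b b')
     = (\<Sum>b\<in>configs d T. (f b b :: complex))"
  by (auto intro!: sum.cong simp: if_distrib[of "\<lambda>z. z * _"] cong: if_cong)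

lemma string_op_hs_rank_one_tensor_id:
  assumes lb: "local_basis d lam" and S: "finite S" "\<gamma> \<subseteq> S"
    and k: "k \<in> S - \<gamma>" "j k \<noteq> 0" "j k < d^2"
  shows "hs_inner d S (rank_one_tensor_id S \<gamma> \<phi>) (adjoint (string_op lam S j)) = 0"
proof -
  have "hs_inner d S (rank_one_tensor_id S \<gamma> \<phi>) (adjoint (string_op lam S j))
      = (\<Sum>a\<in>configs d \<gamma>. \<Sum>a'\<in>configs d \<gamma>. string_op lam \<gamma> j a' a * rank_one \<phi> a a')
        * (\<Sum>b\<in>configs d (S - \<gamma>). \<Sum>b'\<in>configs d (S - \<gamma>).
             (if b = b' then 1 else 0) * string_op lam (S - \<gamma>) j b' b)"
    unfolding sum2_configs_restrict_mult[OF S(2), symmetric] rank_one_tensor_id_def hs_inner_def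
      adjoint_def string_op_split[OF S(2,1)]
    by (simp add: mult_ac)
  also have "\<dots> = 0"
    using trace_string_op_eq_0[where j = j, OF lb finite_Diff[OF S(1)] k] S
    by (simp add: sum2_configs_diagonal)
  finally show ?thesis .
qed

lemma hs_norm_rank_one_tensor_id:
  assumes S: "finite S" "\<gamma> \<subseteq> S"
  shows "hs_inner d S (rank_one_tensor_id S \<gamma> \<phi>) (rank_one_tensor_id S \<gamma> \<phi>)
       = of_real ((\<Sum>a\<in>configs d \<gamma>. (cmod (\<phi> a))^2)^2 * real d ^ card (S - \<gamma>))"
proof -
  have "hs_inner d S (rank_one_tensor_id S \<gamma> \<phi>) (rank_one_tensor_id S \<gamma> \<phi>)
      = (\<Sum>a\<in>configs d \<gamma>. \<Sum>a'\<in>configs d \<gamma>. (\<phi> a * cnj (\<phi> a)) * (\<phi> a' * cnj (\<phi> a')))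
        * (\<Sum>b\<in>configs d (S - \<gamma>). \<Sum>b'\<in>configs d (S - \<gamma>). (if b = b' then 1 else 0) * 1)"
    unfolding sum2_configs_restrict_mult[OF S(2), symmetric] rank_one_tensor_id_def rank_one_def
      hs_inner_def
    by (intro sum.cong refl) (simp add: mult_ac)
  also have "\<dots> = of_real ((\<Sum>a\<in>configs d \<gamma>. (cmod (\<phi> a))^2)^2 * real d ^ card (S - \<gamma>))"
    using S by (simp add: sum2_configs_diagonal card_configs sum_product[symmetric] sum_mult_cnj
      power2_eq_square)
  finally show ?thesis .
qed

lemma hs_product_rank_one_tensor_id:
  assumes S: "finite S" "\<gamma> \<subseteq> S"
    and \<psi>: "\<And>x. x \<in> configs d S \<Longrightarrow> \<psi> x = \<phi> (restrict x \<gamma>) * \<chi> (restrict x (S - \<gamma>))"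
  shows "hs_inner d S (rank_one \<psi>) (rank_one_tensor_id S \<gamma> \<phi>)
       = of_real ((\<Sum>a\<in>configs d \<gamma>. (cmod (\<phi> a))^2)^2 * (\<Sum>b\<in>configs d (S - \<gamma>). (cmod (\<chi> b))^2))"
proof -
  have "hs_inner d S (rank_one \<psi>) (rank_one_tensor_id S \<gamma> \<phi>)
      = (\<Sum>a\<in>configs d \<gamma>. \<Sum>a'\<in>configs d \<gamma>. (\<phi> a * cnj (\<phi> a)) * (\<phi> a' * cnj (\<phi> a')))
        * (\<Sum>b\<in>configs d (S - \<gamma>). \<Sum>b'\<in>configs d (S - \<gamma>).
             (if b = b' then 1 else 0) * (\<chi> b * cnj (\<chi> b')))"
    unfolding sum2_configs_restrict_mult[OF S(2), symmetric] rank_one_tensor_id_def rank_one_def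
      hs_inner_def
    by (intro sum.cong refl) (simp add: \<psi> mult_ac)
  also have "\<dots> = of_real ((\<Sum>a\<in>configs d \<gamma>. (cmod (\<phi> a))^2)^2
                          * (\<Sum>b\<in>configs d (S - \<gamma>). (cmod (\<chi> b))^2))"
    using S by (simp add: sum2_configs_diagonal sum_product[symmetric] sum_mult_cnj power2_eq_square)
  finally show ?thesis .
qed

lemma sum_norm_product_vector:
  assumes "G \<subseteq> S"
    and "\<And>x. x \<in> configs d S \<Longrightarrow> \<psi> x = \<phi> (restrict x G) * \<chi> (restrict x (S - G))"
  shows "(\<Sum>x\<in>configs d S. (cmod (\<psi> x))^2)
       = (\<Sum>a\<in>configs d G. (cmod (\<phi> a))^2) * (\<Sum>b\<in>configs d (S - G). (cmod (\<chi> b))^2)"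
proof -
  have "(\<Sum>x\<in>configs d S. (cmod (\<psi> x))^2)
      = (\<Sum>x\<in>configs d S. (cmod (\<phi> (restrict x G)))^2 * (cmod (\<chi> (restrict x (S - G))))^2)"
    using assms(2) by (intro sum.cong refl) (simp add: norm_mult power_mult_distrib)
  then show ?thesis
    by (simp add: sum_configs_restrict_mult[OF assms(1), where g = "\<lambda>a. (cmod (\<phi> a))^2"
        and h = "\<lambda>b. (cmod (\<chi> b))^2"])
qed

lemma product_vector_unit_factors:
  assumes "G \<subseteq> S"
    and \<psi>: "\<And>x. x \<in> configs d S \<Longrightarrow> \<psi> x = \<phi> (restrict x G) * \<chi> (restrict x (S - G))"
    and nrm: "(\<Sum>x\<in>configs d S. (cmod (\<psi> x))^2) = 1"
  obtains \<phi>' \<chi>' where "\<And>x. x \<in> configs d S \<Longrightarrow> \<psi> x = \<phi>' (restrict x G) * \<chi>' (restrict x (S - G))"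
    and "(\<Sum>a\<in>configs d G. (cmod (\<phi>' a))^2) = 1" and "(\<Sum>b\<in>configs d (S - G). (cmod (\<chi>' b))^2) = 1"
proof -
  define n\<phi> where "n\<phi> = (\<Sum>a\<in>configs d G. (cmod (\<phi> a))^2)"
  define n\<chi> where "n\<chi> = (\<Sum>b\<in>configs d (S - G). (cmod (\<chi> b))^2)"
  have "n\<phi> * n\<chi> = 1"
    using nrm sum_norm_product_vector[where \<phi> = \<phi> and \<chi> = \<chi>, OF assms(1) \<psi>] unfolding n\<phi>_def n\<chi>_def by simp
  moreover have "n\<phi> \<ge> 0" "n\<chi> \<ge> 0" unfolding n\<phi>_def n\<chi>_def by (simp_all add: sum_nonneg)
  ultimately have "n\<phi> > 0" by (cases "n\<phi> = 0") auto
  define r where "r = sqrt n\<phi>"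
  have "r > 0" "r^2 = n\<phi>" unfolding r_def using \<open>n\<phi> > 0\<close> by simp_all
  show ?thesis
  proof (rule that[of "\<lambda>a. \<phi> a / of_real r" "\<lambda>b. of_real r * \<chi> b"])
    show "(\<Sum>a\<in>configs d G. (cmod (\<phi> a / of_real r))^2) = 1"
      using \<open>r > 0\<close> \<open>r^2 = n\<phi>\<close> \<open>n\<phi> > 0\<close>
      by (simp add: norm_divide power_divide sum_divide_distrib[symmetric] n\<phi>_def)
    show "(\<Sum>b\<in>configs d (S - G). (cmod (of_real r * \<chi> b))^2) = 1"
      using \<open>r > 0\<close> \<open>r^2 = n\<phi>\<close> \<open>n\<phi> * n\<chi> = 1\<close>
      by (simp add: norm_mult power_mult_distrib sum_distrib_left[symmetric] n\<chi>_def)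
  qed (use \<psi> \<open>r > 0\<close> in simp)
qed

lemma product_state_corr_bound:
  fixes \<psi> \<phi> \<chi> :: "cfg \<Rightarrow> complex" and \<A> :: "nat set set"
  assumes lb: "local_basis d lam" and "d > 0" and \<gamma>: "\<gamma> \<subseteq> {..<n}"
    and \<A>: "\<And>\<alpha>. \<alpha> \<in> \<A> \<Longrightarrow> \<alpha> \<subseteq> {..<n}" "\<And>\<alpha>. \<alpha> \<in> \<A> \<Longrightarrow> \<not> \<alpha> \<subseteq> \<gamma>"
    and \<psi>: "\<And>x. x \<in> configs d {..<n} \<Longrightarrow> \<psi> x = \<phi> (restrict x \<gamma>) * \<chi> (restrict x ({..<n} - \<gamma>))"
    and \<phi>: "(\<Sum>a\<in>configs d \<gamma>. (cmod (\<phi> a))^2) = 1"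
    and \<chi>: "(\<Sum>b\<in>configs d ({..<n} - \<gamma>). (cmod (\<chi> b))^2) = 1"
  shows "(\<Sum>\<alpha>\<in>\<A>. \<Sum>i\<in>PiE \<alpha> (\<lambda>_. {1..<d^2}). (cmod (corr_coeff d n lam (rank_one \<psi>) \<alpha> i))^2)
       \<le> real d ^ n - real d ^ card \<gamma>" (is "?T \<le> _")
proof -
  let ?N = "{..<n}" and ?R = "rank_one_tensor_id {..<n} \<gamma> \<phi>"
  define E where "E = (\<lambda>(\<alpha>, i). adjoint (string_op lam ?N (pad_index \<alpha> i)))"
  define Idx where "Idx = Sigma \<A> (\<lambda>\<alpha>. PiE \<alpha> (\<lambda>_. {1..<d^2}))"
  have "finite (PiE \<alpha> (\<lambda>_. {1..<d^2}))" if "\<alpha> \<in> \<A>" for \<alpha>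
    using \<A>(1)[OF that] by (auto intro!: finite_PiE dest: finite_subset)
  moreover have "finite \<A>"
    using \<A>(1) by (meson finite_lessThan finite_Pow_iff finite_subset PowI subsetI)
  ultimately have "finite Idx" and T: "?T = (\<Sum>q\<in>Idx. (cmod (hs_inner d ?N (rank_one \<psi>) (E q)))^2)"
    by (auto simp: Idx_def E_def corr_coeff_def sum.Sigma split_def)
  have E_hs: "hs_inner d ?N (E q) (E q') = of_real (if q = q' then real d ^ n else 0)"
    if "q \<in> Idx" "q' \<in> Idx" for q q'
  proof -
    obtain \<alpha> i \<alpha>' i' where q: "q = (\<alpha>, i)" "q' = (\<alpha>', i')" and "\<alpha> \<in> \<A>" "\<alpha>' \<in> \<A>"
      and "i \<in> PiE \<alpha> (\<lambda>_. {1..<d^2})" "i' \<in> PiE \<alpha>' (\<lambda>_. {1..<d^2})"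
      using \<open>q \<in> Idx\<close> \<open>q' \<in> Idx\<close> unfolding Idx_def by blast
    from pad_string_op_hs_orthogonal[OF lb \<open>d > 0\<close> finite_lessThan \<A>(1) \<A>(1) this(5,6)] this(3,4)
    show ?thesis by (simp add: q E_def)
  qed
  have R_perp: "hs_inner d ?N ?R (E q) = 0" if "q \<in> Idx" for q
  proof -
    obtain \<alpha> i where q: "q = (\<alpha>, i)" and "\<alpha> \<in> \<A>" and i: "i \<in> PiE \<alpha> (\<lambda>_. {1..<d^2})"
      using \<open>q \<in> Idx\<close> unfolding Idx_def by blast
    then obtain k where "k \<in> \<alpha>" "k \<notin> \<gamma>" using \<A>(2) by blast
    then have "k \<in> ?N - \<gamma>" "pad_index \<alpha> i k \<noteq> 0" "pad_index \<alpha> i k < d^2"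
      using \<A>(1)[OF \<open>\<alpha> \<in> \<A>\<close>] PiE_mem[OF i] unfolding pad_index_def by fastforce+
    from string_op_hs_rank_one_tensor_id[where j = "pad_index \<alpha> i", OF lb finite_lessThan \<gamma> this]
    show ?thesis by (simp add: q E_def)
  qed
  have "(cmod (hs_inner d ?N (rank_one \<psi>) ?R))^2 / real d ^ card (?N - \<gamma>)
      + (\<Sum>q\<in>Idx. (cmod (hs_inner d ?N (rank_one \<psi>) (E q)))^2 / real d ^ n)
      \<le> (\<Sum>p\<in>configs d ?N \<times> configs d ?N. (cmod (case_prod (rank_one \<psi>) p))^2)"
    unfolding hs_inner_pairs
    by (rule bessel_inequality_insert)
      (use E_hs R_perp \<open>finite Idx\<close> \<open>d > 0\<close> in
        \<open>simp_all add: hs_inner_pairs[symmetric] hs_norm_rank_one_tensor_id[OF finite_lessThan \<gamma>] \<phi>\<close>)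
  also have "\<dots> = (\<Sum>x\<in>configs d ?N. (cmod (\<psi> x))^2)^2"
    by (simp add: sum.cartesian_product' rank_one_def norm_mult power_mult_distrib sum_product
        power2_eq_square mult_ac)
  also have "\<dots> = 1"
    using sum_norm_product_vector[where \<phi> = \<phi> and \<chi> = \<chi>, OF \<gamma> \<psi>] \<phi> \<chi> by simp
  finally have "1 / real d ^ card (?N - \<gamma>) + ?T / real d ^ n \<le> 1"
    using hs_product_rank_one_tensor_id[where \<phi> = \<phi> and \<chi> = \<chi>, OF finite_lessThan \<gamma> \<psi>] \<phi> \<chi>
    unfolding T by (simp add: sum_divide_distrib)
  moreover have "real d ^ n = real d ^ card \<gamma> * real d ^ card (?N - \<gamma>)"
    using card_Diff_subset[OF finite_subset[OF \<gamma>] \<gamma>] card_mono[OF finite_lessThan \<gamma>]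
    by (simp add: power_add[symmetric])
  ultimately show ?thesis
    using \<open>d > 0\<close> by (simp add: field_simps)
qed

lemma bipartite_product_state_corr_bound:
  fixes \<psi> \<phi> \<chi> :: "cfg \<Rightarrow> complex"
  assumes lb: "local_basis d lam" and "d > 0"
    and \<beta>: "\<beta> \<subseteq> {..<n}" "\<beta> \<noteq> {}" "\<beta> \<noteq> {..<n}"
    and \<psi>: "\<And>x. x \<in> configs d {..<n} \<Longrightarrow> \<psi> x = \<phi> (restrict x \<beta>) * \<chi> (restrict x ({..<n} - \<beta>))"
    and nrm: "(\<Sum>x\<in>configs d {..<n}. (cmod (\<psi> x))^2) = 1"
  shows "(\<Sum>\<alpha>\<in>{\<alpha>. \<alpha> \<subseteq> {..<n} \<and> \<alpha> \<noteq> {} \<and> real (card \<alpha>) \<ge> real n / 2 + 1}.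
            \<Sum>i\<in>PiE \<alpha> (\<lambda>_. {1..<d^2}). (cmod (corr_coeff d n lam (rank_one \<psi>) \<alpha> i))^2)
       \<le> real d ^ n - real d"
proof -
  let ?N = "{..<n}"
  have "card \<beta> + card (?N - \<beta>) = n"
    using card_Diff_subset[OF finite_subset[OF \<beta>(1)] \<beta>(1)] card_mono[OF finite_lessThan \<beta>(1)] by simp
  then obtain \<gamma> \<phi>' \<chi>' where \<gamma>: "\<gamma> \<subseteq> ?N" "\<gamma> \<noteq> {}" "2 * card \<gamma> \<le> n"
    and \<psi>': "\<And>x. x \<in> configs d ?N \<Longrightarrow> \<psi> x = \<phi>' (restrict x \<gamma>) * \<chi>' (restrict x (?N - \<gamma>))"
  proof (cases "2 * card \<beta> \<le> n")
    case True
    then show ?thesis using that[of \<beta> \<phi> \<chi>] \<beta> \<psi> by blast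
  next
    case False
    have "?N - (?N - \<beta>) = \<beta>" using \<beta>(1) by auto
    then show ?thesis
      using that[of "?N - \<beta>" \<chi> \<phi>] False \<beta> \<psi> \<open>card \<beta> + card (?N - \<beta>) = n\<close>
      by (auto simp: mult.commute)
  qed
  obtain \<phi>\<^sub>1 \<chi>\<^sub>1 where unit_factors:
    "\<And>x. x \<in> configs d ?N \<Longrightarrow> \<psi> x = \<phi>\<^sub>1 (restrict x \<gamma>) * \<chi>\<^sub>1 (restrict x (?N - \<gamma>))"
    "(\<Sum>a\<in>configs d \<gamma>. (cmod (\<phi>\<^sub>1 a))^2) = 1" "(\<Sum>b\<in>configs d (?N - \<gamma>). (cmod (\<chi>\<^sub>1 b))^2) = 1"
    using product_vector_unit_factors[OF \<gamma>(1) \<psi>' nrm] by blast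
  have "(\<Sum>\<alpha>\<in>{\<alpha>. \<alpha> \<subseteq> ?N \<and> \<alpha> \<noteq> {} \<and> real (card \<alpha>) \<ge> real n / 2 + 1}.
            \<Sum>i\<in>PiE \<alpha> (\<lambda>_. {1..<d^2}). (cmod (corr_coeff d n lam (rank_one \<psi>) \<alpha> i))^2)
       \<le> real d ^ n - real d ^ card \<gamma>"
  proof (rule product_state_corr_bound[OF lb \<open>d > 0\<close> \<gamma>(1) _ _ unit_factors])
    show "\<not> \<alpha> \<subseteq> \<gamma>" if "\<alpha> \<in> {\<alpha>. \<alpha> \<subseteq> ?N \<and> \<alpha> \<noteq> {} \<and> real (card \<alpha>) \<ge> real n / 2 + 1}" for \<alpha>
      using that \<gamma>(3) card_mono[OF finite_subset[OF \<gamma>(1)], of \<alpha>] by auto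
  qed auto
  also have "\<dots> \<le> real d ^ n - real d"
    using power_increasing[of 1 "card \<gamma>" "real d"] \<gamma>(1,2) \<open>d > 0\<close>
    by (simp add: Suc_le_eq card_gt_0_iff finite_subset)
  finally show ?thesis .
qed

lemma power2_weighted_sum_le:
  fixes p r :: "'a \<Rightarrow> real"
  assumes "finite J" "\<And>j. j \<in> J \<Longrightarrow> p j \<ge> 0" "sum p J = 1"
  shows "(\<Sum>j\<in>J. p j * r j)^2 \<le> (\<Sum>j\<in>J. p j * (r j)^2)"
proof -
  define M where "M = (\<Sum>j\<in>J. p j * r j)"
  have "0 \<le> (\<Sum>j\<in>J. p j * (r j - M)^2)"
    using assms(2) by (intro sum_nonneg) simp
  also have "\<dots> = (\<Sum>j\<in>J. p j * (r j)^2) - 2 * M * (\<Sum>j\<in>J. p j * r j) + M^2 * sum p J"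
    by (simp add: power2_eq_square algebra_simps sum.distrib sum_subtractf sum_distrib_left
        sum_distrib_right)
  finally show ?thesis using assms(3) by (simp add: M_def power2_eq_square)
qed

theorem corollary1:
  fixes d n :: nat and lam :: "nat \<Rightarrow> lmat" and \<rho> :: op
  assumes "n \<ge> 2" and "d \<ge> 2"
    and "local_basis d lam"
    and "biseparable d n \<rho>"
  shows "corr_C d n lam (real n / 2 + 1) \<rho> \<le> real d ^ n - real d"
proof -
  obtain m :: nat and p \<psi> \<beta> \<phi> \<chi> where p: "\<forall>j<m. p j \<ge> 0" "(\<Sum>j<m. p j) = 1"
    and nrm: "\<forall>j<m. (\<Sum>x\<in>configs d {..<n}. (cmod (\<psi> j x))^2) = 1"
    and \<beta>: "\<forall>j<m. \<beta> j \<subseteq> {..<n} \<and> \<beta> j \<noteq> {} \<and> \<beta> j \<noteq> {..<n} \<and>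
           (\<forall>x\<in>configs d {..<n}. \<psi> j x = \<phi> j (restrict x (\<beta> j)) * \<chi> j (restrict x ({..<n} - \<beta> j)))"
    and \<rho>: "\<forall>x\<in>configs d {..<n}. \<forall>y\<in>configs d {..<n}.
           \<rho> x y = (\<Sum>j<m. complex_of_real (p j) * \<psi> j x * cnj (\<psi> j y))"
    using assms(4) unfolding biseparable_def by blast
  let ?L = "{\<alpha>. \<alpha> \<subseteq> {..<n} \<and> \<alpha> \<noteq> {} \<and> real (card \<alpha>) \<ge> real n / 2 + 1}"
  let ?c = "\<lambda>j \<alpha> i. corr_coeff d n lam (rank_one (\<psi> j)) \<alpha> i"
  have "corr_coeff d n lam \<rho> \<alpha> i = (\<Sum>j<m. of_real (p j) * ?c j \<alpha> i)" for \<alpha> i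
    by (rule corr_coeff_sum) (use \<rho> in \<open>simp_all add: rank_one_def mult.assoc\<close>)
  then have "corr_C d n lam (real n / 2 + 1) \<rho>
      = (\<Sum>\<alpha>\<in>?L. \<Sum>i\<in>PiE \<alpha> (\<lambda>_. {1..<d^2}). (\<Sum>j<m. p j * Re (?c j \<alpha> i))^2)"
    unfolding corr_C_def tau_sq_def by (intro sum.cong refl) (simp add: trace_reduced_tensor_op)
  also have "\<dots> \<le> (\<Sum>\<alpha>\<in>?L. \<Sum>i\<in>PiE \<alpha> (\<lambda>_. {1..<d^2}). \<Sum>j<m. p j * (cmod (?c j \<alpha> i))^2)"
  proof (intro sum_mono order.trans[OF power2_weighted_sum_le] mult_left_mono)
    show "(Re z)^2 \<le> (cmod z)^2" for z
      using abs_Re_le_cmod[of z] by (simp add: abs_le_square_iff[symmetric])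
  qed (use p in auto)
  also have "\<dots> = (\<Sum>j<m. p j * (\<Sum>\<alpha>\<in>?L. \<Sum>i\<in>PiE \<alpha> (\<lambda>_. {1..<d^2}). (cmod (?c j \<alpha> i))^2))"
    by (simp add: sum_distrib_left sum.swap[of _ "{..<m}"])
  also have "\<dots> \<le> (\<Sum>j<m. p j * (real d ^ n - real d))"
    using p(1) \<beta> nrm assms(2,3)
    by (intro sum_mono mult_left_mono bipartite_product_state_corr_bound) auto
  also have "\<dots> = real d ^ n - real d"
    using p(2) by (simp add: sum_distrib_right[symmetric])
  finally show ?thesis .
qed

end
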